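(* Let $s \ge 0$ be a fixed real number and let $(k(n))_{n \ge 1}$ be a sequence of integers with $2 \le k(n) \le n$. Suppose there is a constant $\delta > 0$ such that $s \le \frac{1}{n}\log_2 \#F_{k(n)}^n - \delta$ for all sufficiently large $n$, where $\#F_k^n = \sum_{w=0}^{k}\binom{n}{w}$. Then $F_{k(n)}^n \wedge Q_s^n$ is satisfiable with high probability, i.e. $\lim_{n\to\infty}\Pr[F_{k(n)}^n \wedge Q_s^n \text{ is satisfiable}] = 1$.
   Context: For integers $0 \le k \le n$, $F_k^n$ denotes the at-most-$k$ cardinality constraint on $x \in \{0,1\}^n$ (satisfied iff the Hamming weight $|x| \le k$), with $\#F_k^n = \sum_{w=0}^{k}\binom{n}{w}$ satisfying assignments. For real $s \ge 0$, $Q_s^n$ is the random system $Ax = b$ over $\mathrm{GF}(2)$ with $\lceil sn\rceil$ equations, where all entries of $A \in \{0,1\}^{\lceil sn\rceil \times n}$ and $b \in \{0,1\}^{\lceil sn \rceil}$ are independent and uniform on $\{0,1\}$. $F_k^n \wedge Q_s^n$ is satisfiable iff some $x \in \{0,1\}^n$ has $|x| \le k$ and $Ax=b$; probability is over $(A,b)$. "With high probability" means with probability tending to $1$ as $n \to \infty$. *)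

theory Defs
  imports Complex_Main
begin

definition numF :: "nat \<Rightarrow> nat \<Rightarrow> nat" where
  "numF n k = (\<Sum>w=0..k. n choose w)"

definition hweight :: "bool list \<Rightarrow> nat" where
  "hweight x = length (filter id x)"

text \<open>A is a list of rows (each row a bool list), b a bool list;
  A x = b over GF(2): for every row i, the parity of the inner product equals b!i.\<close>
definition gf2_solves :: "bool list list \<Rightarrow> bool list \<Rightarrow> bool list \<Rightarrow> bool" where
  "gf2_solves A b x \<longleftrightarrow>
     (\<forall>i < length A. odd (card {j. j < length x \<and> A ! i ! j \<and> x ! j}) = b ! i)"

definition instances :: "nat \<Rightarrow> nat \<Rightarrow> (bool list list \<times> bool list) set" where
  "instances m n = {(A, b). length A = m \<and> (\<forall>r\<in>set A. length r = n) \<and> length b = m}"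

definition sat_inst :: "nat \<Rightarrow> nat \<Rightarrow> bool list list \<Rightarrow> bool list \<Rightarrow> bool" where
  "sat_inst n k A b \<longleftrightarrow> (\<exists>x. length x = n \<and> hweight x \<le> k \<and> gf2_solves A b x)"

text \<open>Probability, over uniform (A,b) with ceil(s n) equations, that F_k^n /\ Q_s^n is satisfiable.\<close>
definition prob_sat :: "real \<Rightarrow> nat \<Rightarrow> nat \<Rightarrow> real" where
  "prob_sat s n k =
     (let m = nat \<lceil>s * real n\<rceil> in
      real (card {(A, b) \<in> instances m n. sat_inst n k A b}) / real (card (instances m n)))"

end

theory Submission
  imports Defs
begin

text \<open>Second moment method. For an instance (A, b) let X be the number of solutions of A x = b
  of Hamming weight at most k, among N = numF n k candidates. A fixed x solves the m equations
  with probability 2^-m, and two distinct x, y solve them with probability exactly 4^-m: for a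
  uniform row r the bits r.x and r.y agree with probability 1/2, and the right-hand side is
  independent of r. So X has mean N 2^-m and variance at most its mean, and Chebyshev gives
  Pr[X = 0] <= 2^m / N, which decays like 2^(-delta n) once m = ceil(s n) <= log2 N - delta n.\<close>

lemma card_filter_as_sum:
  "finite A \<Longrightarrow> real (card {x\<in>A. Q x}) = (\<Sum>x\<in>A. of_bool (Q x))"
  by (simp add: Int_def conj_commute)

lemma sum_card_witnesses:
  assumes "finite I" "finite S"
  shows "(\<Sum>p\<in>I. real (card {x\<in>S. P p x})) = (\<Sum>x\<in>S. real (card {p\<in>I. P p x}))"
  unfolding card_filter_as_sum[OF assms(1)] card_filter_as_sum[OF assms(2)] by (rule sum.swap)

lemma sum_card_witnesses_squared:
  assumes "finite I" "finite S"
  shows "(\<Sum>p\<in>I. real (card {x\<in>S. P p x}) ^ 2)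
         = (\<Sum>x\<in>S. \<Sum>y\<in>S. real (card {p\<in>I. P p x \<and> P p y}))"
  unfolding power2_eq_square card_filter_as_sum[OF assms(1)] card_filter_as_sum[OF assms(2)]
    sum_product of_bool_conj
  by (subst sum.swap, rule sum.cong[OF refl], rule sum.swap)

lemma card_zeros_mult_square_le:
  fixes X :: "'p \<Rightarrow> real"
  assumes "finite I"
  shows "real (card {p\<in>I. X p = 0}) * \<mu> ^ 2 \<le> (\<Sum>p\<in>I. (X p - \<mu>) ^ 2)"
proof -
  have "real (card {p\<in>I. X p = 0}) * \<mu> ^ 2 = (\<Sum>p\<in>{p\<in>I. X p = 0}. (X p - \<mu>) ^ 2)"
    by simp
  also have "\<dots> \<le> (\<Sum>p\<in>I. (X p - \<mu>) ^ 2)"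
    using assms by (intro sum_mono2) auto
  finally show ?thesis .
qed

text \<open>Chebyshev's inequality for the number of witnesses x \<in> S of a uniformly random p \<in> I,
  in counting form: a is the number of p witnessed by a fixed x.\<close>
lemma second_moment_count:
  fixes P :: "'p \<Rightarrow> 'x \<Rightarrow> bool"
  assumes fin: "finite I" "finite S"
    and single: "\<And>x. x \<in> S \<Longrightarrow> card {p\<in>I. P p x} = a"
    and pair: "\<And>x y. x \<in> S \<Longrightarrow> y \<in> S \<Longrightarrow> x \<noteq> y \<Longrightarrow>
                 card {p\<in>I. P p x \<and> P p y} * card I \<le> a ^ 2"
  shows "card {p\<in>I. \<forall>x\<in>S. \<not> P p x} * card S * a \<le> card I ^ 2"
proof (cases "I = {}")
  case True
  then show ?thesis by simp
next
  case False
  define X where "X p = real (card {x\<in>S. P p x})" for p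
  define N where "N = real (card S)"
  define M where "M = real (card I)"
  define \<mu> where "\<mu> = N * a / M"
  have M0: "M > 0" using False fin by (simp add: M_def card_gt_0_iff)
  have sum_X: "(\<Sum>p\<in>I. X p) = N * a"
    unfolding X_def sum_card_witnesses[OF fin] by (simp add: single N_def)
  have pair_le: "real (card {p\<in>I. P p x \<and> P p y}) \<le> of_bool (x = y) * a + a ^ 2 / M"
    if "x \<in> S" "y \<in> S" for x y
  proof (cases "x = y")
    case False
    have "real (card {p\<in>I. P p x \<and> P p y}) * M \<le> a ^ 2"
      unfolding M_def of_nat_mult[symmetric] of_nat_power[symmetric] of_nat_le_iff
      by (rule pair[OF that False])
    with False M0 show ?thesis by (simp add: pos_le_divide_eq)
  qed (use single[OF \<open>x \<in> S\<close>] M0 in simp)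
  have "(\<Sum>p\<in>I. (X p) ^ 2) \<le> (\<Sum>x\<in>S. \<Sum>y\<in>S. of_bool (x = y) * a + a ^ 2 / M)"
    unfolding X_def sum_card_witnesses_squared[OF fin] by (intro sum_mono pair_le)
  also have "\<dots> = N * a + N ^ 2 * a ^ 2 / M"
    using fin by (simp add: sum.distrib N_def power2_eq_square distrib_left times_divide_eq_right mult.assoc)
  finally have sum_X2: "(\<Sum>p\<in>I. (X p) ^ 2) \<le> N * a + N ^ 2 * a ^ 2 / M" .
  have Z: "{p\<in>I. \<forall>x\<in>S. \<not> P p x} = {p\<in>I. X p = 0}"
    using fin by (auto simp: X_def)
  have "real (card {p\<in>I. X p = 0}) * \<mu> ^ 2 \<le> (\<Sum>p\<in>I. (X p - \<mu>) ^ 2)"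
    using fin(1) by (rule card_zeros_mult_square_le)
  also have "\<dots> = (\<Sum>p\<in>I. (X p) ^ 2) - 2 * \<mu> * (\<Sum>p\<in>I. X p) + M * \<mu> ^ 2"
    by (simp add: power2_diff sum.distrib sum_subtractf sum_distrib_left sum_distrib_right M_def mult_ac)
  also have "\<dots> \<le> N * a"
    using sum_X sum_X2 M0 by (simp add: \<mu>_def power2_eq_square field_simps)
  finally have "(real (card {p\<in>I. X p = 0}) * N * a) * (N * a) \<le> M ^ 2 * (N * a)"
    using M0 by (simp add: \<mu>_def power_divide field_simps power2_eq_square)
  moreover have "N * a \<ge> 0" by (simp add: N_def)
  ultimately have "real (card {p\<in>I. X p = 0}) * N * a \<le> M ^ 2"
    by (cases "N * a = 0") (auto simp: mult_le_cancel_right_pos)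
  then show ?thesis
    unfolding Z N_def M_def of_nat_mult[symmetric] of_nat_power[symmetric] of_nat_le_iff .
qed

lemma card_zipped_lists:
  assumes "finite B"
  shows "card {(A, b). length A = m \<and> length b = m \<and> (\<forall>i<m. (A ! i, b ! i) \<in> B)} = card B ^ m"
proof -
  let ?unzip = "\<lambda>l. (map fst l, map snd l)"
  have "{(A, b). length A = m \<and> length b = m \<and> (\<forall>i<m. (A ! i, b ! i) \<in> B)}
        = ?unzip ` {l. set l \<subseteq> B \<and> length l = m}"
  proof (intro equalityI subsetI)
    fix p assume "p \<in> {(A, b). length A = m \<and> length b = m \<and> (\<forall>i<m. (A ! i, b ! i) \<in> B)}"
    then obtain A b where p: "p = (A, b)" "length A = m" "length b = m" "\<forall>i<m. (A ! i, b ! i) \<in> B"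
      by auto
    then have "zip A b \<in> {l. set l \<subseteq> B \<and> length l = m}" "?unzip (zip A b) = p"
      by (auto simp: set_zip)
    then show "p \<in> ?unzip ` {l. set l \<subseteq> B \<and> length l = m}" by force
  qed (auto simp: nth_mem subsetD)
  moreover have "inj_on ?unzip {l. set l \<subseteq> B \<and> length l = m}"
    by (intro inj_onI) (metis zip_map_fst_snd prod.inject)
  ultimately show ?thesis
    using assms by (simp add: card_image card_lists_length_eq)
qed

lemma finite_bool_lists: "finite {r :: bool list. length r = n}"
  using finite_lists_length_eq[of "UNIV :: bool set" n] by simp

lemma card_bool_lists: "card {r :: bool list. length r = n} = 2 ^ n"
  using card_lists_length_eq[of "UNIV :: bool set" n] by simp

lemma card_instances_rowwise:
  "card {(A, b) \<in> instances m n. \<forall>i<m. Q (A ! i) (b ! i)} = card {(r, c). length r = n \<and> Q r c} ^ m"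
proof -
  have "{(A, b) \<in> instances m n. \<forall>i<m. Q (A ! i) (b ! i)}
      = {(A, b). length A = m \<and> length b = m \<and> (\<forall>i<m. (A ! i, b ! i) \<in> {(r, c). length r = n \<and> Q r c})}"
    unfolding instances_def by (auto simp: all_set_conv_all_nth)
  also have "card \<dots> = card {(r, c). length r = n \<and> Q r c} ^ m"
    by (rule card_zipped_lists, rule finite_subset[of _ "{r. length r = n} \<times> UNIV"])
      (auto simp: finite_bool_lists)
  finally show ?thesis .
qed

lemma card_instances: "card (instances m n) = 2 ^ m * (2 ^ n) ^ m"
proof -
  have "card (instances m n) = card {(A, b) \<in> instances m n. \<forall>i<m. True}" by simp
  also have "\<dots> = card {(r :: bool list, c :: bool). length r = n \<and> True} ^ m"
    by (rule card_instances_rowwise)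
  also have "{(r :: bool list, c :: bool). length r = n \<and> True} = {r. length r = n} \<times> UNIV"
    by auto
  finally show ?thesis
    by (simp add: card_cartesian_product card_bool_lists power_mult_distrib)
qed

lemma finite_instances: "finite (instances m n)"
  using card_instances[of m n] by (metis card.infinite power_not_zero zero_neq_numeral mult_eq_0_iff)

definition gf2_dot :: "bool list \<Rightarrow> bool list \<Rightarrow> bool" where
  "gf2_dot r x \<longleftrightarrow> odd (card {j. j < length x \<and> r ! j \<and> x ! j})"

lemma gf2_solves_iff_dot: "gf2_solves A b x \<longleftrightarrow> (\<forall>i<length A. gf2_dot (A ! i) x = b ! i)"
  unfolding gf2_solves_def gf2_dot_def by simp

lemma gf2_dot_flip:
  assumes "j < length x" "j < length r"
  shows "gf2_dot (r[j := \<not> r ! j]) x \<longleftrightarrow> gf2_dot r x \<noteq> x ! j"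
proof -
  let ?S = "{i. i < length x \<and> r ! i \<and> x ! i}"
  let ?T = "{i. i < length x \<and> r[j := \<not> r ! j] ! i \<and> x ! i}"
  have fin: "finite ?S" by simp
  consider "\<not> x ! j" | "x ! j" "r ! j" | "x ! j" "\<not> r ! j"
    by blast
  then show ?thesis
  proof cases
    case 1
    then have "?T = ?S" using assms by (auto simp: nth_list_update)
    with 1 show ?thesis by (simp add: gf2_dot_def)
  next
    case 2
    then have "?T = ?S - {j}" "j \<in> ?S" using assms by (auto simp: nth_list_update)
    then have "card ?S = Suc (card ?T)"
      using card_Suc_Diff1[OF fin] by presburger
    with 2 show ?thesis unfolding gf2_dot_def by simp
  next
    case 3
    then have "?T = insert j ?S" "j \<notin> ?S" using assms by (auto simp: nth_list_update)
    then have "card ?T = Suc (card ?S)"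
      using fin by simp
    with 3 show ?thesis unfolding gf2_dot_def by simp
  qed
qed

lemma card_eq_half_by_involution:
  assumes "finite L" "E \<subseteq> L"
    and "\<And>r. r \<in> L \<Longrightarrow> f r \<in> L" "\<And>r. r \<in> L \<Longrightarrow> f (f r) = r"
    and "\<And>r. r \<in> L \<Longrightarrow> f r \<in> E \<longleftrightarrow> r \<notin> E"
  shows "2 * card E = card L"
proof -
  have "f ` E = L - E"
    using assms(2-5) by (auto simp: image_iff) (metis subsetD)
  moreover have "inj_on f E"
    by (metis assms(2,4) inj_onI subsetD)
  ultimately have "card E = card L - card E"
    by (metis assms(1,2) card_Diff_subset card_image finite_subset)
  moreover have "card E \<le> card L" using assms(1,2) by (rule card_mono)
  ultimately show ?thesis by linarith
qed

text \<open>Flipping a coordinate where \<open>x\<close> and \<open>y\<close> differ changes exactly one of the two inner products.\<close>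
lemma card_dot_agree:
  assumes "length x = n" "length y = n" "x \<noteq> y"
  shows "2 * card {r. length r = n \<and> gf2_dot r x = gf2_dot r y} = 2 ^ n"
proof -
  have "\<exists>j<n. x ! j \<noteq> y ! j"
  proof (rule ccontr)
    assume "\<not> (\<exists>j<n. x ! j \<noteq> y ! j)"
    then have "x = y" using assms(1,2) by (auto intro: nth_equalityI)
    with assms(3) show False ..
  qed
  then obtain j where j: "j < n" "x ! j \<noteq> y ! j" by blast
  define flip where "flip r = r[j := \<not> r ! j]" for r :: "bool list"
  have "2 * card {r. length r = n \<and> gf2_dot r x = gf2_dot r y} = card {r :: bool list. length r = n}"
  proof (rule card_eq_half_by_involution)
    fix r :: "bool list" assume "r \<in> {r. length r = n}"
    then have r: "length r = n" by simp
    show "flip r \<in> {r. length r = n}" "flip (flip r) = r"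
      using r j by (simp_all add: flip_def)
    have "gf2_dot (flip r) x \<longleftrightarrow> gf2_dot r x \<noteq> x ! j" "gf2_dot (flip r) y \<longleftrightarrow> gf2_dot r y \<noteq> y ! j"
      unfolding flip_def using gf2_dot_flip r j assms(1,2) by simp_all
    with j(2) have "gf2_dot (flip r) x = gf2_dot (flip r) y \<longleftrightarrow> gf2_dot r x \<noteq> gf2_dot r y"
      by argo
    then show "flip r \<in> {r. length r = n \<and> gf2_dot r x = gf2_dot r y}
               \<longleftrightarrow> r \<notin> {r. length r = n \<and> gf2_dot r x = gf2_dot r y}"
      using r by (simp add: flip_def)
  qed (auto simp: finite_bool_lists)
  then show ?thesis by (simp add: card_bool_lists)
qed

lemma card_instances_solved_by:
  assumes "length x = n"
  shows "card {(A, b) \<in> instances m n. gf2_solves A b x} = (2 ^ n) ^ m"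
proof -
  have "{(A, b) \<in> instances m n. gf2_solves A b x}
      = {(A, b) \<in> instances m n. \<forall>i<m. gf2_dot (A ! i) x = b ! i}"
    by (auto simp: gf2_solves_iff_dot instances_def)
  also have "card \<dots> = card {(r, c). length r = n \<and> gf2_dot r x = c} ^ m"
    by (rule card_instances_rowwise)
  also have "{(r, c). length r = n \<and> gf2_dot r x = c} = (\<lambda>r. (r, gf2_dot r x)) ` {r. length r = n}"
    by auto
  finally show ?thesis
    by (simp add: card_image inj_on_def card_bool_lists)
qed

lemma card_instances_solved_by_both:
  assumes "length x = n" "length y = n" "x \<noteq> y"
  shows "card {(A, b) \<in> instances m n. gf2_solves A b x \<and> gf2_solves A b y} * 2 ^ m = (2 ^ n) ^ m"
proof -
  have "{(A, b) \<in> instances m n. gf2_solves A b x \<and> gf2_solves A b y}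
      = {(A, b) \<in> instances m n. \<forall>i<m. gf2_dot (A ! i) x = b ! i \<and> gf2_dot (A ! i) y = b ! i}"
    by (auto simp: gf2_solves_iff_dot instances_def)
  also have "card \<dots> = card {(r, c). length r = n \<and> gf2_dot r x = c \<and> gf2_dot r y = c} ^ m"
    by (rule card_instances_rowwise)
  also have "{(r, c). length r = n \<and> gf2_dot r x = c \<and> gf2_dot r y = c}
      = (\<lambda>r. (r, gf2_dot r x)) ` {r. length r = n \<and> gf2_dot r x = gf2_dot r y}"
    by auto
  also have "card \<dots> = card {r. length r = n \<and> gf2_dot r x = gf2_dot r y}"
    by (simp add: card_image inj_on_def)
  finally have "card {(A, b) \<in> instances m n. gf2_solves A b x \<and> gf2_solves A b y} * 2 ^ m
      = (2 * card {r. length r = n \<and> gf2_dot r x = gf2_dot r y}) ^ m"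
    by (simp add: power_mult_distrib)
  then show ?thesis
    unfolding card_dot_agree[OF assms] .
qed

lemma card_weight_bounded: "card {x. length x = n \<and> hweight x \<le> k} = numF n k"
proof -
  have "bij_betw (\<lambda>x. {j. j < length x \<and> x ! j})
          {x. length x = n \<and> hweight x \<le> k} {B. B \<subseteq> {..<n} \<and> card B \<le> k}"
  proof (rule bij_betw_byWitness[where f' = "\<lambda>B. map (\<lambda>j. j \<in> B) [0..<n]"])
    have "B \<subseteq> {..<n} \<Longrightarrow> {i. i < n \<and> map (\<lambda>j. j \<in> B) [0..<n] ! i} = B" for B by auto
    then show "(\<lambda>B. map (\<lambda>j. j \<in> B) [0..<n]) ` {B. B \<subseteq> {..<n} \<and> card B \<le> k}
               \<subseteq> {x. length x = n \<and> hweight x \<le> k}"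
      by (auto simp: hweight_def length_filter_conv_card)
  qed (auto intro: nth_equalityI simp: hweight_def length_filter_conv_card)
  then have "card {x. length x = n \<and> hweight x \<le> k} = card {B. B \<subseteq> {..<n} \<and> card B \<le> k}"
    by (rule bij_betw_same_card)
  also have "{B. B \<subseteq> {..<n} \<and> card B \<le> k} = (\<Union>w\<in>{0..k}. {B. B \<subseteq> {..<n} \<and> card B = w})"
    by auto
  also have "card \<dots> = (\<Sum>w=0..k. card {B. B \<subseteq> {..<n} \<and> card B = w})"
    by (rule card_UN_disjoint) (auto intro: finite_subset[of _ "Pow {..<n}"])
  finally show ?thesis by (simp add: n_subsets numF_def)
qed

lemma card_unsat_instances:
  "card {(A, b) \<in> instances m n. \<not> sat_inst n k A b} * numF n k \<le> card (instances m n) * 2 ^ m"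
proof -
  define S where "S = {x. length x = n \<and> hweight x \<le> k}"
  define a :: nat where "a = (2 ^ n) ^ m"
  have "card {p \<in> instances m n. \<forall>x\<in>S. \<not> gf2_solves (fst p) (snd p) x} * card S * a
        \<le> card (instances m n) ^ 2"
  proof (rule second_moment_count)
    show "finite S" unfolding S_def
      by (rule finite_subset[OF _ finite_bool_lists[of n]]) auto
    show "card {p \<in> instances m n. gf2_solves (fst p) (snd p) x} = a" if "x \<in> S" for x
      using card_instances_solved_by[of x n m] that by (simp add: S_def a_def case_prod_beta')
    show "card {p \<in> instances m n. gf2_solves (fst p) (snd p) x \<and> gf2_solves (fst p) (snd p) y}
            * card (instances m n) \<le> a ^ 2"
      if "x \<in> S" "y \<in> S" "x \<noteq> y" for x y
      using card_instances_solved_by_both[of x n y m] that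
      by (simp add: S_def a_def card_instances case_prod_beta' power2_eq_square mult_ac)
  qed (rule finite_instances)
  moreover have "{p \<in> instances m n. \<forall>x\<in>S. \<not> gf2_solves (fst p) (snd p) x}
                 = {(A, b) \<in> instances m n. \<not> sat_inst n k A b}"
    by (auto simp: S_def sat_inst_def)
  ultimately have "(card {(A, b) \<in> instances m n. \<not> sat_inst n k A b} * numF n k) * a
                   \<le> (card (instances m n) * 2 ^ m) * a"
    by (simp add: S_def card_weight_bounded card_instances a_def power2_eq_square mult_ac)
  then show ?thesis by (simp add: a_def)
qed

lemma numF_ge_1: "1 \<le> numF n k"
  unfolding numF_def by (simp add: sum.atLeast_Suc_atMost[of 0 k])

lemma prob_sat_le_1: "prob_sat s n k \<le> 1"
proof -
  let ?I = "instances (nat \<lceil>s * real n\<rceil>) n"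
  have "real (card {(A, b) \<in> ?I. sat_inst n k A b}) \<le> card ?I"
    by (intro of_nat_mono card_mono finite_instances) auto
  moreover have "0 < card ?I" by (simp add: card_instances)
  ultimately show ?thesis
    by (simp add: prob_sat_def Let_def divide_le_eq_1)
qed

lemma prob_sat_ge: "1 - 2 ^ nat \<lceil>s * real n\<rceil> / real (numF n k) \<le> prob_sat s n k"
proof -
  define m where "m = nat \<lceil>s * real n\<rceil>"
  define I where "I = instances m n"
  define Y where "Y = {(A, b) \<in> I. sat_inst n k A b}"
  define Z where "Z = {(A, b) \<in> I. \<not> sat_inst n k A b}"
  have I0: "real (card I) > 0" by (simp add: I_def card_instances)
  have "card Y + card Z = card I"
    unfolding Y_def Z_def using finite_instances[of m n]
    by (subst card_Un_disjoint[symmetric])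
      (auto simp: I_def intro: arg_cong[where f = card] finite_subset[OF _ finite_instances])
  then have "real (card Y) = real (card I) - real (card Z)"
    by (metis add_diff_cancel_right' of_nat_add)
  then have Y: "real (card Y) / card I = 1 - real (card Z) / card I"
    using I0 by (simp add: diff_divide_distrib)
  have "real (card Z * numF n k) \<le> real (card I * 2 ^ m)"
    using card_unsat_instances[of m n k] unfolding Z_def I_def of_nat_le_iff .
  then have "real (card Z) / card I \<le> 2 ^ m / real (numF n k)"
    using I0 numF_ge_1[of n k] by (simp add: divide_simps mult.commute)
  then have "1 - 2 ^ m / real (numF n k) \<le> real (card Y) / card I"
    unfolding Y by linarith
  then show ?thesis by (simp add: prob_sat_def Let_def m_def I_def Y_def)
qed

lemma two_pow_ceil_div_le:
  fixes s \<delta> N :: real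
  assumes "0 \<le> s" "0 < n" "1 \<le> N" "s \<le> log 2 N / n - \<delta>"
  shows "2 ^ nat \<lceil>s * n\<rceil> / N \<le> 2 * (2 powr - \<delta>) ^ n"
proof -
  have "2 powr (n * (s + \<delta>)) \<le> N"
    using assms by (simp add: field_simps le_log_iff)
  moreover have "(2::real) ^ nat \<lceil>s * n\<rceil> \<le> 2 powr (s * n + 1)"
    using assms(1) by (simp add: powr_realpow[symmetric])
  ultimately have "2 ^ nat \<lceil>s * n\<rceil> / N \<le> 2 powr (s * n + 1) / 2 powr (n * (s + \<delta>))"
    by (intro frac_le) auto
  also have "\<dots> = 2 powr (s * n + 1 - n * (s + \<delta>))"
    by (rule powr_diff[symmetric])
  also have "s * n + 1 - n * (s + \<delta>) = 1 + - \<delta> * n"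
    by (simp add: algebra_simps)
  also have "2 powr (1 + - \<delta> * n) = 2 powr 1 * 2 powr (- \<delta> * n)"
    by (rule powr_add)
  also have "\<dots> = 2 * (2 powr - \<delta>) ^ n"
    by (simp add: powr_powr flip: powr_realpow)
  finally show ?thesis .
qed

theorem mainTheorem2:
  fixes s :: real and k :: "nat \<Rightarrow> nat" and \<delta> :: real
  assumes "s \<ge> 0"
    and "\<forall>n\<ge>2. 2 \<le> k n \<and> k n \<le> n"
    and "\<delta> > 0"
    and "eventually (\<lambda>n. s \<le> log 2 (real (numF n (k n))) / real n - \<delta>) sequentially"
  shows "(\<lambda>n. prob_sat s n (k n)) \<longlonglongrightarrow> 1"
proof (rule tendsto_sandwich)
  define r :: real where "r = 2 powr - \<delta>"
  have "0 < r" "r < 1" unfolding r_def using assms(3) by (auto intro: powr_less_one)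
  then show "(\<lambda>n. 1 - 2 * r ^ n) \<longlonglongrightarrow> 1"
    using tendsto_diff[OF tendsto_const tendsto_mult[OF tendsto_const LIMSEQ_power_zero[of r]]] by simp
  show "eventually (\<lambda>n. 1 - 2 * r ^ n \<le> prob_sat s n (k n)) sequentially"
    using assms(4) eventually_gt_at_top[of 0]
  proof eventually_elim
    case (elim n)
    then have "2 ^ nat \<lceil>s * n\<rceil> / real (numF n (k n)) \<le> 2 * r ^ n"
      unfolding r_def using assms(1) numF_ge_1 by (intro two_pow_ceil_div_le) auto
    then show ?case using prob_sat_ge[of s n "k n"] by simp
  qed
  show "eventually (\<lambda>n. prob_sat s n (k n) \<le> 1) sequentially"
    by (simp add: prob_sat_le_1)
qed simp

end
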